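(* Let $d$ be odd and let $\sigma_\triangle$ be a sign pattern of length $d+1$ with which the pair $(2,1)$ is compatible. For a polynomial realizing $(\sigma_\triangle,(2,1))$ denote its real roots by $-\beta<0<\alpha_1<\alpha_2$. (3) If all monomials of odd degree have positive sign in $\sigma_\triangle$, then there exist polynomials realizing $(\sigma_\triangle,(2,1))$, and every such polynomial satisfies $\beta<\alpha_1<\alpha_2$. (4) If all monomials of even degree have positive sign in $\sigma_\triangle$, then there exist polynomials realizing $(\sigma_\triangle,(2,1))$, and every such polynomial satisfies $\alpha_1<\alpha_2<\beta$.
   Context: A sign pattern of length $d+1$ is a sequence of $d+1$ symbols $+$/$-$ beginning with $+$; a monic polynomial $x^d+\sum_{j<d}a_jx^j$ with all $a_j\neq0$ defines the sign pattern $(+,\operatorname{sign}(a_{d-1}),\ldots,\operatorname{sign}(a_0))$, and the sign of the monomial $x^j$ in the pattern is the entry corresponding to $a_j$. For a sign pattern with $c$ sign changes and $p$ sign preservations ($c+p=d$), a pair $(pos,neg)$ is compatible with it if $pos\le c$, $c-pos$ even, $neg\le p$, $p-neg$ even. A monic polynomial realizes the couple $(\sigma,(pos,neg))$ if it has all coefficients non-zero, defines $\sigma$, has exactly $pos$ positive and $neg$ negative real roots, all simple, and no other real roots. *)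

theory Defs
  imports "HOL-Computational_Algebra.Polynomial"
begin

text \<open>A sign pattern is a list of booleans (True = +, False = -), its first entry
  corresponds to the leading coefficient a_d (which must be +), entry k corresponds to a_(d-k).\<close>

definition is_sign_pattern :: "nat \<Rightarrow> bool list \<Rightarrow> bool" where
  "is_sign_pattern d \<sigma> \<longleftrightarrow> length \<sigma> = d + 1 \<and> \<sigma> ! 0 = True"

definition sign_changes :: "bool list \<Rightarrow> nat" where
  "sign_changes \<sigma> = card {i. Suc i < length \<sigma> \<and> \<sigma> ! i \<noteq> \<sigma> ! Suc i}"

definition sign_preservations :: "bool list \<Rightarrow> nat" where
  "sign_preservations \<sigma> = card {i. Suc i < length \<sigma> \<and> \<sigma> ! i = \<sigma> ! Suc i}"

definition compatible :: "bool list \<Rightarrow> nat \<Rightarrow> nat \<Rightarrow> bool" where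
  "compatible \<sigma> pos neg \<longleftrightarrow>
     pos \<le> sign_changes \<sigma> \<and> even (sign_changes \<sigma> - pos) \<and>
     neg \<le> sign_preservations \<sigma> \<and> even (sign_preservations \<sigma> - neg)"

definition monomial_sign :: "bool list \<Rightarrow> nat \<Rightarrow> bool" where
  "monomial_sign \<sigma> j = \<sigma> ! (length \<sigma> - 1 - j)"

definition defines_pattern :: "real poly \<Rightarrow> bool list \<Rightarrow> bool" where
  "defines_pattern p \<sigma> \<longleftrightarrow> degree p + 1 = length \<sigma> \<and>
     (\<forall>j \<le> degree p. coeff p j > 0 \<longleftrightarrow> monomial_sign \<sigma> j)"

definition realizes :: "real poly \<Rightarrow> bool list \<Rightarrow> nat \<Rightarrow> nat \<Rightarrow> bool" where
  "realizes p \<sigma> pos neg \<longleftrightarrow>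
     lead_coeff p = 1 \<and>
     (\<forall>j \<le> degree p. coeff p j \<noteq> 0) \<and>
     defines_pattern p \<sigma> \<and>
     card {x::real. x > 0 \<and> poly p x = 0} = pos \<and>
     card {x::real. x < 0 \<and> poly p x = 0} = neg \<and>
     (\<forall>x::real. poly p x = 0 \<longrightarrow> x \<noteq> 0 \<and> order x p = 1)"

end

theory Submission
  imports Defs
begin

text \<open>The Euler shift x p' - k p equals x^(k+1) (p / x^k)', so by Rolle's theorem it has a root
  strictly between any two roots of p on a half-line. Hence if x p' - k p has no negative root, p
  has at most one simple negative root, and if the second shift of p has no positive root, p has at
  most two positive roots, which are simple when there are two. A realizing polynomial is obtained
  by giving one monomial of negative sign the large coefficient -(d + 1), so that p(1) < 0, the
  monomials of the prescribed parity coefficient 1, and all others tiny coefficients; the shifts are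
  then dominated by the extreme monomials of the right sign.

  For the position of the negative root -\<beta>: if all odd coefficients are positive, then
  p(-\<alpha>1) < p(\<alpha>1) = 0 < p(0), so -\<beta> lies in (-\<alpha>1, 0); if all even coefficients are positive,
  then p(-\<alpha>2) > -p(\<alpha>2) = 0, and odd degree puts -\<beta> below -\<alpha>2.\<close>

section \<open>Euler shifts and roots on a half-line\<close>

definition euler_shift :: "nat \<Rightarrow> real poly \<Rightarrow> real poly" where
  "euler_shift k p = pCons 0 (pderiv p) - smult (of_nat k) p"

lemma poly_euler_shift: "poly (euler_shift k p) x = x * poly (pderiv p) x - of_nat k * poly p x"
  by (simp add: euler_shift_def)

lemma coeff_euler_shift: "coeff (euler_shift k p) j = (real j - real k) * coeff p j"
  by (cases j) (auto simp: euler_shift_def coeff_pderiv algebra_simps)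

lemma degree_euler_shift_le: "degree (euler_shift k p) \<le> degree p"
  by (rule degree_le) (auto simp: coeff_euler_shift coeff_eq_0)

lemma poly_eq_sum_atMost:
  fixes p :: "'a::comm_semiring_1 poly"
  assumes "degree p \<le> n"
  shows "poly p x = (\<Sum>j\<le>n. coeff p j * x ^ j)"
proof -
  have "poly p x = poly (\<Sum>j\<le>n. monom (coeff p j) j) x"
    by (simp only: poly_as_sum_of_monoms'[OF assms])
  also have "\<dots> = (\<Sum>j\<le>n. coeff p j * x ^ j)"
    by (simp add: poly_sum poly_monom)
  finally show ?thesis .
qed

lemma poly_euler_shift_eq_sum:
  assumes "degree p \<le> d"
  shows "poly (euler_shift k p) x = (\<Sum>j\<le>d. ((real j - real k) * coeff p j) * x ^ j)"
  using poly_eq_sum_atMost[of "euler_shift k p" d x] degree_euler_shift_le[of k p] assms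
  by (simp add: coeff_euler_shift)

lemma poly_euler_shift2_eq_sum:
  assumes "degree p \<le> d"
  shows "poly (euler_shift k (euler_shift k p)) x =
    (\<Sum>j\<le>d. ((real j - real k) ^ 2 * coeff p j) * x ^ j)"
  using poly_eq_sum_atMost[of "euler_shift k (euler_shift k p)" d x]
    degree_euler_shift_le[of k p] degree_euler_shift_le[of k "euler_shift k p"] assms
  by (simp add: coeff_euler_shift power2_eq_square mult.assoc)

lemma DERIV_poly_div_power:
  fixes p :: "real poly"
  assumes "x \<noteq> 0"
  shows "DERIV (\<lambda>t. poly p t / t ^ k) x :> poly (euler_shift k p) x / x ^ Suc k"
proof (rule DERIV_cong)
  show "DERIV (\<lambda>t. poly p t / t ^ k) x :>
      (poly (pderiv p) x * x ^ k - poly p x * (of_nat k * x ^ (k - 1))) / (x ^ k * x ^ k)"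
    using assms by (auto intro!: derivative_eq_intros)
  show "(poly (pderiv p) x * x ^ k - poly p x * (of_nat k * x ^ (k - 1))) / (x ^ k * x ^ k)
      = poly (euler_shift k p) x / x ^ Suc k"
    using assms by (cases k) (simp_all add: poly_euler_shift field_simps)
qed

lemma euler_shift_root_between:
  fixes p :: "real poly"
  assumes ab: "a < b" and no0: "0 \<notin> {a..b}" and roots: "poly p a = 0" "poly p b = 0"
  shows "\<exists>z. a < z \<and> z < b \<and> poly (euler_shift k p) z = 0"
proof -
  define f where "f = (\<lambda>t. poly p t / t ^ k)"
  have "continuous_on {a..b} f"
    unfolding f_def using no0 by (intro continuous_intros) auto
  moreover have "f differentiable (at x)" if "a < x" "x < b" for x
    using DERIV_poly_div_power[of x p k] no0 that
    by (auto simp: f_def real_differentiable_def)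
  ultimately obtain z where z: "a < z" "z < b" "DERIV f z :> 0"
    using Rolle[OF ab, of f] roots by (auto simp: f_def)
  have "z \<noteq> 0" using no0 z by auto
  then have "poly (euler_shift k p) z / z ^ Suc k = 0"
    using DERIV_unique[OF DERIV_poly_div_power z(3)[unfolded f_def]] by simp
  with \<open>z \<noteq> 0\<close> z show ?thesis by auto
qed

definition zero_free_interval :: "real set \<Rightarrow> bool" where
  "zero_free_interval S \<longleftrightarrow> 0 \<notin> S \<and> (\<forall>a\<in>S. \<forall>b\<in>S. {a..b} \<subseteq> S)"

lemma zero_free_interval_halflines: "zero_free_interval {0<..}" "zero_free_interval {..<0}"
  by (auto simp: zero_free_interval_def)

lemma euler_shift_root_between_in:
  fixes p :: "real poly"
  assumes S: "zero_free_interval S" and "a \<in> S" "b \<in> S" "a < b" "poly p a = 0" "poly p b = 0"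
  shows "\<exists>z\<in>S. a < z \<and> z < b \<and> poly (euler_shift k p) z = 0"
proof -
  have "{a..b} \<subseteq> S" "0 \<notin> S" using S assms(2,3) by (auto simp: zero_free_interval_def)
  then obtain z where "a < z" "z < b" "poly (euler_shift k p) z = 0"
    using euler_shift_root_between[of a b p k] assms(4-) by blast
  with \<open>{a..b} \<subseteq> S\<close> show ?thesis by force
qed

lemma root_unique_if_euler_shift_nonzero:
  fixes p :: "real poly"
  assumes S: "zero_free_interval S"
    and nonzero: "\<And>x. x \<in> S \<Longrightarrow> poly (euler_shift k p) x \<noteq> 0"
    and "a \<in> S" "b \<in> S" "poly p a = 0" "poly p b = 0"
  shows "a = b"
  using euler_shift_root_between_in[OF S, of a b p k] euler_shift_root_between_in[OF S, of b a p k]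
    nonzero assms(3-) by (metis linorder_neqE)

lemma no_three_roots_if_euler_shift2_nonzero:
  fixes p :: "real poly"
  assumes S: "zero_free_interval S"
    and nonzero: "\<And>x. x \<in> S \<Longrightarrow> poly (euler_shift k (euler_shift k p)) x \<noteq> 0"
    and "a < b" "b < c" "a \<in> S" "c \<in> S" "poly p a = 0" "poly p b = 0" "poly p c = 0"
  shows False
proof -
  have "b \<in> {a..c}" "{a..c} \<subseteq> S" using S assms(3-6) by (auto simp: zero_free_interval_def)
  then have "b \<in> S" by blast
  then obtain y z where "y \<in> S" "y < b" "poly (euler_shift k p) y = 0"
      and "z \<in> S" "b < z" "poly (euler_shift k p) z = 0"
    using euler_shift_root_between_in[OF S, of a b p k] euler_shift_root_between_in[OF S, of b c p k]
      assms(3-) by blast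
  then show False using root_unique_if_euler_shift_nonzero[OF S nonzero, of y z] by simp
qed

lemma pderiv_nonzero_if_euler_shift2_nonzero:
  fixes p :: "real poly"
  assumes S: "zero_free_interval S"
    and nonzero: "\<And>x. x \<in> S \<Longrightarrow> poly (euler_shift k (euler_shift k p)) x \<noteq> 0"
    and "a \<in> S" "b \<in> S" "a \<noteq> b" "poly p a = 0" "poly p b = 0"
  shows "poly (pderiv p) a \<noteq> 0"
proof
  assume "poly (pderiv p) a = 0"
  then have "poly (euler_shift k p) a = 0" using assms(6) by (simp add: poly_euler_shift)
  moreover obtain z where "z \<in> S" "z \<noteq> a" "poly (euler_shift k p) z = 0"
    using euler_shift_root_between_in[OF S, of a b p k] euler_shift_root_between_in[OF S, of b a p k]
      assms(3-) by (metis linorder_neqE order.strict_implies_not_eq)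
  ultimately show False using root_unique_if_euler_shift_nonzero[OF S nonzero] assms(3) by blast
qed

lemma order_eq_1_if_pderiv_nonzero:
  fixes p :: "real poly"
  assumes "p \<noteq> 0" "poly p x = 0" "poly (pderiv p) x \<noteq> 0"
  shows "order x p = 1"
  using order_pderiv[OF assms(1,2)] order_root[of "pderiv p" x] assms(3) by simp

lemma poly_root_gt:
  fixes p :: "real poly"
  assumes "0 < lead_coeff p" "poly p c < 0"
  shows "\<exists>r>c. poly p r = 0"
proof -
  obtain n where n: "\<forall>x\<ge>n. lead_coeff p \<le> poly p x"
    using poly_pinfty_gt_lc[OF assms(1)] by blast
  then have "0 < poly p (max n (c + 1))" using assms(1) by (meson less_le_trans max.cobounded1)
  moreover have "c < max n (c + 1)" by simp
  ultimately show ?thesis using poly_IVT_pos[of c "max n (c + 1)" p] assms(2) by auto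
qed

lemma poly_root_lt:
  fixes p :: "real poly"
  assumes "odd (degree p)" "0 < lead_coeff p" "0 < poly p c"
  shows "\<exists>r<c. poly p r = 0"
proof -
  define q where "q = - pcompose p [:0, -1:]"
  have "lead_coeff q = lead_coeff p"
    using assms(1) by (simp add: q_def lead_coeff_comp)
  moreover have "poly q (- c) < 0" using assms(3) by (simp add: q_def poly_pcompose)
  ultimately obtain r where "- c < r" "poly q r = 0" using poly_root_gt[of q "- c"] assms(2) by auto
  then show ?thesis by (intro exI[of _ "- r"]) (simp add: q_def poly_pcompose)
qed

text \<open>Two positive roots come from p(0) > 0 > p(1) and p(+\<infinity>) > 0, a negative one from odd degree;
  the sign conditions on the Euler shifts forbid any further or multiple root.\<close>
lemma realizes_2_1_if_euler_shifts_nonzero: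
  fixes p :: "real poly"
  assumes "defines_pattern p \<sigma>" and lc: "lead_coeff p = 1"
    and "\<And>j. j \<le> degree p \<Longrightarrow> coeff p j \<noteq> 0" and odd_deg: "odd (degree p)"
    and p0: "0 < poly p 0" and p1: "poly p 1 < 0"
    and pos: "\<And>x. 0 < x \<Longrightarrow> poly (euler_shift k (euler_shift k p)) x \<noteq> 0"
    and neg: "\<And>x. x < 0 \<Longrightarrow> poly (euler_shift l p) x \<noteq> 0"
  shows "realizes p \<sigma> 2 1"
proof -
  have pos': "\<And>x. x \<in> {0<..} \<Longrightarrow> poly (euler_shift k (euler_shift k p)) x \<noteq> 0"
    and neg': "\<And>x. x \<in> {..<0} \<Longrightarrow> poly (euler_shift l p) x \<noteq> 0"
    using pos neg by auto
  note no_three = no_three_roots_if_euler_shift2_nonzero[OF zero_free_interval_halflines(1) pos']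
    and pderiv_pos = pderiv_nonzero_if_euler_shift2_nonzero[OF zero_free_interval_halflines(1) pos']
  obtain r1 where r1: "0 < r1" "r1 < 1" "poly p r1 = 0" using poly_IVT_neg[OF _ p0 p1] by auto
  obtain r2 where r2: "1 < r2" "poly p r2 = 0" using poly_root_gt[of p 1] lc p1 by auto
  obtain r3 where r3: "r3 < 0" "poly p r3 = 0" using poly_root_lt[of p 0] odd_deg lc p0 by auto
  have pos_roots: "{x. 0 < x \<and> poly p x = 0} = {r1, r2}"
  proof (intro set_eqI iffI)
    fix x assume x: "x \<in> {x. 0 < x \<and> poly p x = 0}"
    show "x \<in> {r1, r2}"
    proof (rule ccontr)
      assume "x \<notin> {r1, r2}"
      then consider "x < r1" | "r1 < x" "x < r2" | "r2 < x" by fastforce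
      then show False
        by cases (use no_three[of x r1 r2] no_three[of r1 x r2] no_three[of r1 r2 x] x r1 r2 in auto)
    qed
  qed (use r1 r2 in auto)
  have neg_roots: "{x. x < 0 \<and> poly p x = 0} = {r3}"
    using root_unique_if_euler_shift_nonzero[OF zero_free_interval_halflines(2) neg'] r3 by auto
  have simple: "order x p = 1" if x: "poly p x = 0" for x
  proof (rule order_eq_1_if_pderiv_nonzero[OF _ x])
    show "p \<noteq> 0" using lc by auto
    have "x \<noteq> 0" using x p0 by auto
    then consider "x = r1" | "x = r2" | "x < 0" using pos_roots x by fastforce
    then show "poly (pderiv p) x \<noteq> 0"
    proof cases
      case 1 then show ?thesis using pderiv_pos[of r1 r2] r1 r2 by auto
    next
      case 2 then show ?thesis using pderiv_pos[of r2 r1] r1 r2 by auto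
    next
      case 3 then show ?thesis using neg[of x] x by (auto simp: poly_euler_shift)
    qed
  qed
  show ?thesis
    unfolding realizes_def using assms(1-3) pos_roots neg_roots simple r1 r2 p0 by auto
qed

section \<open>Dominant monomials\<close>

lemma power_le_add_power:
  fixes x :: real
  assumes "0 < x" "a \<le> j" "j \<le> b"
  shows "x ^ j \<le> x ^ a + x ^ b"
proof (cases "x \<le> 1")
  case True
  then have "x ^ j \<le> x ^ a" using assms by (intro power_decreasing) auto
  moreover have "0 \<le> x ^ b" using assms by simp
  ultimately show ?thesis by linarith
next
  case False
  then have "x ^ j \<le> x ^ b" using assms by (intro power_increasing) auto
  moreover have "0 \<le> x ^ a" using assms by simp
  ultimately show ?thesis by linarith
qed

text \<open>Each monomial of degree between a and b is at most x^a + x^b, so the at most d + 1 small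
  terms cost at most (d + 1) \<delta> (x^a + x^b), less than the two dominant terms contribute.\<close>
lemma sum_powers_pos:
  fixes c :: "nat \<Rightarrow> real" and x \<delta> :: real
  assumes x: "0 < x" and ab: "a < b" "b \<le> d" and ca: "1 \<le> c a" and cb: "1 \<le> c b"
    and \<delta>: "0 \<le> \<delta>" "real (Suc d) * \<delta> < 1"
    and small: "\<And>j. j \<le> d \<Longrightarrow> 0 \<le> c j \<or> a \<le> j \<and> j \<le> b \<and> \<bar>c j\<bar> \<le> \<delta>"
  shows "0 < (\<Sum>j\<le>d. c j * x ^ j)"
proof -
  define s where "s = x ^ a + x ^ b"
  have s: "0 < s" using x by (simp add: s_def add_pos_pos)
  have "(if j = a then x ^ a else 0) + (if j = b then x ^ b else 0) - \<delta> * s \<le> c j * x ^ j"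
    if "j \<le> d" for j
  proof -
    have "0 \<le> \<delta> * s" using \<delta> s by simp
    have dominant: "x ^ i \<le> c i * x ^ i" if "1 \<le> c i" for i
      using mult_right_mono[OF that, of "x ^ i"] x by simp
    from small[OF that] consider "j = a" | "j = b" | "j \<noteq> a" "j \<noteq> b" "0 \<le> c j" |
        "j \<noteq> a" "j \<noteq> b" "a \<le> j" "j \<le> b" "\<bar>c j\<bar> \<le> \<delta>"
      by blast
    then show ?thesis
    proof cases
      case 3
      then show ?thesis
        using \<open>0 \<le> \<delta> * s\<close> x by (auto intro: order.trans[OF _ mult_nonneg_nonneg])
    next
      case 4
      have "\<bar>c j * x ^ j\<bar> \<le> \<delta> * s"
        using mult_mono[OF 4(5) power_le_add_power[OF x 4(3,4)]] \<delta> x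
        by (simp add: abs_mult s_def)
      then show ?thesis using 4(1,2) \<open>0 \<le> \<delta> * s\<close> by auto
    qed (use \<open>0 \<le> \<delta> * s\<close> ab ca cb dominant in fastforce)+
  qed
  then have "(\<Sum>j\<le>d. (if j = a then x ^ a else 0) + (if j = b then x ^ b else 0) - \<delta> * s)
      \<le> (\<Sum>j\<le>d. c j * x ^ j)"
    by (intro sum_mono) simp
  moreover have "(\<Sum>j\<le>d. (if j = a then x ^ a else 0) + (if j = b then x ^ b else 0) - \<delta> * s)
      = (1 - real (Suc d) * \<delta>) * s"
    using ab by (simp add: sum.distrib sum_subtractf s_def algebra_simps)
  moreover have "0 < (1 - real (Suc d) * \<delta>) * s" using \<delta> s by simp
  ultimately show ?thesis by linarith
qed

lemma sum_powers_neg: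
  fixes c :: "nat \<Rightarrow> real" and x \<delta> :: real
  assumes "x < 0" and "a < b" "b \<le> d"
    and "1 \<le> - ((-1) ^ a * c a)" and "1 \<le> - ((-1) ^ b * c b)"
    and "0 \<le> \<delta>" "real (Suc d) * \<delta> < 1"
    and "\<And>j. j \<le> d \<Longrightarrow> 0 \<le> - ((-1) ^ j * c j) \<or> a \<le> j \<and> j \<le> b \<and> \<bar>c j\<bar> \<le> \<delta>"
  shows "(\<Sum>j\<le>d. c j * x ^ j) < 0"
proof -
  have "0 < (\<Sum>j\<le>d. - ((-1) ^ j * c j) * (- x) ^ j)"
    using sum_powers_pos[of "- x" a b d "\<lambda>j. - ((-1) ^ j * c j)" \<delta>] assms
    by (simp add: abs_mult)
  also have "\<dots> = - (\<Sum>j\<le>d. c j * x ^ j)"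
    by (simp add: sum_negf power_minus[of x] algebra_simps)
  finally show ?thesis by simp
qed

lemma sum_neg_if_dominant_neg:
  fixes c :: "nat \<Rightarrow> real"
  assumes "k \<le> d" "c k < - real d" "\<And>j. j \<le> d \<Longrightarrow> j \<noteq> k \<Longrightarrow> c j \<le> 1"
  shows "(\<Sum>j\<le>d. c j) < 0"
proof -
  have "(\<Sum>j\<le>d. c j) = c k + (\<Sum>j\<in>{..d} - {k}. c j)"
    using assms(1) by (simp add: sum.remove)
  also have "(\<Sum>j\<in>{..d} - {k}. c j) \<le> (\<Sum>j\<in>{..d} - {k}. 1)"
    using assms(3) by (intro sum_mono) auto
  also have "\<dots> = real d" using assms(1) by simp
  finally show ?thesis using assms(2) by simp
qed

section \<open>Witness polynomials\<close>

definition pattern_poly :: "bool list \<Rightarrow> (nat \<Rightarrow> real) \<Rightarrow> real poly" where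
  "pattern_poly \<sigma> m = (\<Sum>j<length \<sigma>. monom (if monomial_sign \<sigma> j then m j else - m j) j)"

lemma coeff_pattern_poly:
  "coeff (pattern_poly \<sigma> m) j =
    (if j < length \<sigma> then if monomial_sign \<sigma> j then m j else - m j else 0)"
  by (simp add: pattern_poly_def coeff_sum)

lemma pattern_poly_basic:
  assumes pat: "is_sign_pattern d \<sigma>" and m: "\<And>j. j \<le> d \<Longrightarrow> 0 < m j" and "m d = 1"
  shows "degree (pattern_poly \<sigma> m) = d" "lead_coeff (pattern_poly \<sigma> m) = 1"
    "defines_pattern (pattern_poly \<sigma> m) \<sigma>"
    "\<And>j. j \<le> d \<Longrightarrow> coeff (pattern_poly \<sigma> m) j \<noteq> 0"
proof -
  have len: "length \<sigma> = Suc d" and sign_d: "monomial_sign \<sigma> d"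
    using pat by (auto simp: is_sign_pattern_def monomial_sign_def)
  then have coeff_d: "coeff (pattern_poly \<sigma> m) d = 1" using \<open>m d = 1\<close> by (simp add: coeff_pattern_poly)
  show deg: "degree (pattern_poly \<sigma> m) = d"
    by (rule antisym) (use sign_d \<open>m d = 1\<close> in \<open>auto intro!: degree_le le_degree simp: coeff_pattern_poly len\<close>)
  show "lead_coeff (pattern_poly \<sigma> m) = 1" using deg coeff_d by simp
  show "coeff (pattern_poly \<sigma> m) j \<noteq> 0" if "j \<le> d" for j
    using m[OF that] that by (auto simp: coeff_pattern_poly len)
  show "defines_pattern (pattern_poly \<sigma> m) \<sigma>"
    using m by (fastforce simp: defines_pattern_def deg len coeff_pattern_poly)
qed

lemma index_diff_bounds:
  fixes j k d :: nat
  shows "j \<noteq> k \<Longrightarrow> 1 \<le> (real j - real k) ^ 2"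
    and "j \<le> d \<Longrightarrow> k \<le> d \<Longrightarrow> \<bar>real j - real k\<bar> \<le> (real d + 1) ^ 2"
    and "j \<le> d \<Longrightarrow> k \<le> d \<Longrightarrow> (real j - real k) ^ 2 \<le> (real d + 1) ^ 2"
proof -
  show "1 \<le> (real j - real k) ^ 2" if "j \<noteq> k"
  proof -
    have "1 \<le> \<bar>real j - real k\<bar>" using that by linarith
    then show ?thesis by (metis power2_abs one_le_power)
  qed
  assume "j \<le> d" "k \<le> d"
  then have *: "\<bar>real j - real k\<bar> \<le> real d + 1" by linarith
  then show "(real j - real k) ^ 2 \<le> (real d + 1) ^ 2"
    by (simp add: abs_le_square_iff[symmetric])
  have "real d + 1 \<le> (real d + 1) ^ 2" by (simp add: power2_eq_square)
  with * show "\<bar>real j - real k\<bar> \<le> (real d + 1) ^ 2" by linarith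
qed

text \<open>The coefficient -(d + 1) of x^k makes p(1) < 0; the free coefficients \<plusminus>\<epsilon> are too small
  to change the sign of the Euler shifts, which is decided by the monomials selected by F.\<close>
locale perturbed_pattern =
  fixes d :: nat and \<sigma> :: "bool list" and F :: "nat \<Rightarrow> bool" and k :: nat
  assumes pattern: "is_sign_pattern d \<sigma>" and odd_degree: "odd d"
    and fixed_ends: "F 0" "F d" and fixed_positive: "\<And>j. j \<le> d \<Longrightarrow> F j \<Longrightarrow> monomial_sign \<sigma> j"
    and negative: "k \<le> d" "\<not> F k" "\<not> monomial_sign \<sigma> k"
begin

definition \<epsilon> :: real where "\<epsilon> = 1 / (2 * (real d + 1) ^ 3)"

definition perturbed_poly :: "real poly" where
  "perturbed_poly = pattern_poly \<sigma> (\<lambda>j. if F j then 1 else if j = k then real d + 1 else \<epsilon>)"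

lemma \<epsilon>_pos: "0 < \<epsilon>"
  by (simp add: \<epsilon>_def)

lemma \<epsilon>_small: "real (Suc d) * ((real d + 1) ^ 2 * \<epsilon>) < 1"
proof -
  have "real (Suc d) * ((real d + 1) ^ 2 * \<epsilon>) = 1 / 2"
    by (simp add: \<epsilon>_def power3_eq_cube power2_eq_square)
  then show ?thesis by simp
qed

lemma perturbed_poly_basic:
  "degree perturbed_poly = d" "lead_coeff perturbed_poly = 1"
  "defines_pattern perturbed_poly \<sigma>" "\<And>j. j \<le> d \<Longrightarrow> coeff perturbed_poly j \<noteq> 0"
  unfolding perturbed_poly_def using pattern_poly_basic[OF pattern] \<epsilon>_pos fixed_ends by simp_all

lemma coeff_perturbed_poly_fixed: "j \<le> d \<Longrightarrow> F j \<Longrightarrow> coeff perturbed_poly j = 1"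
  using pattern fixed_positive by (simp add: perturbed_poly_def coeff_pattern_poly is_sign_pattern_def)

lemma coeff_perturbed_poly_negative: "coeff perturbed_poly k = - (real d + 1)"
  using pattern negative by (simp add: perturbed_poly_def coeff_pattern_poly is_sign_pattern_def)

lemma abs_coeff_perturbed_poly_free:
  "j \<le> d \<Longrightarrow> \<not> F j \<Longrightarrow> j \<noteq> k \<Longrightarrow> \<bar>coeff perturbed_poly j\<bar> = \<epsilon>"
  using pattern \<epsilon>_pos by (simp add: perturbed_poly_def coeff_pattern_poly is_sign_pattern_def)

lemma poly_perturbed_poly_1: "poly perturbed_poly 1 < 0"
proof -
  have "poly perturbed_poly 1 = (\<Sum>j\<le>d. coeff perturbed_poly j)"
    using poly_eq_sum_atMost[of perturbed_poly d 1] perturbed_poly_basic(1) by simp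
  also have "\<dots> < 0"
  proof (rule sum_neg_if_dominant_neg[OF negative(1)])
    show "coeff perturbed_poly k < - real d" using coeff_perturbed_poly_negative by simp
    have "1 \<le> 2 * (real d + 1) ^ 3" using one_le_power[of "real d + 1" 3] by linarith
    then have "\<epsilon> \<le> 1" by (simp add: \<epsilon>_def divide_le_eq)
    then show "coeff perturbed_poly j \<le> 1" if "j \<le> d" "j \<noteq> k" for j
      using coeff_perturbed_poly_fixed[of j] abs_coeff_perturbed_poly_free[of j] that by (cases "F j") force+
  qed
  finally show ?thesis .
qed

lemma euler_shift2_perturbed_poly_pos:
  assumes ab: "a < b" "b \<le> d" "F a" "F b" "a \<noteq> k" "b \<noteq> k"
    and between: "\<And>j. j \<le> d \<Longrightarrow> \<not> F j \<Longrightarrow> j \<noteq> k \<Longrightarrow> a \<le> j \<and> j \<le> b" and "0 < x"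
  shows "0 < poly (euler_shift k (euler_shift k perturbed_poly)) x"
proof -
  have "0 < (\<Sum>j\<le>d. ((real j - real k) ^ 2 * coeff perturbed_poly j) * x ^ j)"
  proof (rule sum_powers_pos[OF \<open>0 < x\<close> ab(1,2) _ _ _ \<epsilon>_small])
    show "1 \<le> (real a - real k) ^ 2 * coeff perturbed_poly a"
      "1 \<le> (real b - real k) ^ 2 * coeff perturbed_poly b"
      using coeff_perturbed_poly_fixed[of a] coeff_perturbed_poly_fixed[of b]
        index_diff_bounds(1)[OF ab(5)] index_diff_bounds(1)[OF ab(6)] ab by auto
    show "0 \<le> (real d + 1) ^ 2 * \<epsilon>" using \<epsilon>_pos by simp
    fix j assume "j \<le> d"
    show "0 \<le> (real j - real k) ^ 2 * coeff perturbed_poly j \<or> a \<le> j \<and> j \<le> b \<and>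
        \<bar>(real j - real k) ^ 2 * coeff perturbed_poly j\<bar> \<le> (real d + 1) ^ 2 * \<epsilon>"
      using coeff_perturbed_poly_fixed[OF \<open>j \<le> d\<close>] abs_coeff_perturbed_poly_free[OF \<open>j \<le> d\<close>]
        between[OF \<open>j \<le> d\<close>] index_diff_bounds(3)[OF \<open>j \<le> d\<close> negative(1)] \<epsilon>_pos
      by (cases "F j"; cases "j = k") (auto simp: abs_mult intro: mult_right_mono)
  qed
  then show ?thesis using poly_euler_shift2_eq_sum[of perturbed_poly d k x] perturbed_poly_basic(1)
    by simp
qed

lemma euler_shift_perturbed_poly_neg:
  assumes ab: "a < b" "b \<le> d" "F a" "F b" and "l \<le> d"
    and ends: "1 \<le> - ((-1) ^ a * (real a - real l))" "1 \<le> - ((-1) ^ b * (real b - real l))"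
    and fixed: "\<And>j. j \<le> d \<Longrightarrow> F j \<Longrightarrow> 0 \<le> - ((-1) ^ j * (real j - real l))"
    and "0 \<le> (-1) ^ k * (real k - real l)"
    and between: "\<And>j. j \<le> d \<Longrightarrow> \<not> F j \<Longrightarrow> j \<noteq> k \<Longrightarrow> a \<le> j \<and> j \<le> b" and "x < 0"
  shows "poly (euler_shift l perturbed_poly) x < 0"
proof -
  have "(\<Sum>j\<le>d. ((real j - real l) * coeff perturbed_poly j) * x ^ j) < 0"
  proof (rule sum_powers_neg[OF \<open>x < 0\<close> ab(1,2) _ _ _ \<epsilon>_small])
    show "1 \<le> - ((-1) ^ a * ((real a - real l) * coeff perturbed_poly a))"
      "1 \<le> - ((-1) ^ b * ((real b - real l) * coeff perturbed_poly b))"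
      using coeff_perturbed_poly_fixed[of a] coeff_perturbed_poly_fixed[of b] ab ends by auto
    show "0 \<le> (real d + 1) ^ 2 * \<epsilon>" using \<epsilon>_pos by simp
    fix j assume "j \<le> d"
    have "- ((-1) ^ k * ((real k - real l) * coeff perturbed_poly k))
        = (real d + 1) * ((-1) ^ k * (real k - real l))"
      by (simp add: coeff_perturbed_poly_negative algebra_simps)
    then have "0 \<le> - ((-1) ^ k * ((real k - real l) * coeff perturbed_poly k))"
      using \<open>0 \<le> (-1) ^ k * (real k - real l)\<close> by simp
    then show "0 \<le> - ((-1) ^ j * ((real j - real l) * coeff perturbed_poly j)) \<or> a \<le> j \<and> j \<le> b \<and>
        \<bar>(real j - real l) * coeff perturbed_poly j\<bar> \<le> (real d + 1) ^ 2 * \<epsilon>"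
      using coeff_perturbed_poly_fixed[OF \<open>j \<le> d\<close>] abs_coeff_perturbed_poly_free[OF \<open>j \<le> d\<close>]
        fixed[OF \<open>j \<le> d\<close>] between[OF \<open>j \<le> d\<close>] index_diff_bounds(2)[OF \<open>j \<le> d\<close> \<open>l \<le> d\<close>] \<epsilon>_pos
      by (cases "F j"; cases "j = k") (auto simp: abs_mult intro: mult_right_mono)
  qed
  then show ?thesis using poly_euler_shift_eq_sum[of perturbed_poly d l x] perturbed_poly_basic(1)
    by simp
qed

lemma realizes_perturbed_poly:
  assumes "\<And>x. 0 < x \<Longrightarrow> poly (euler_shift l (euler_shift l perturbed_poly)) x \<noteq> 0"
    and "\<And>x. x < 0 \<Longrightarrow> poly (euler_shift l' perturbed_poly) x \<noteq> 0"
  shows "realizes perturbed_poly \<sigma> 2 1"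
proof (rule realizes_2_1_if_euler_shifts_nonzero[OF _ _ _ _ _ poly_perturbed_poly_1 assms])
  show "0 < poly perturbed_poly 0"
    using coeff_perturbed_poly_fixed[of 0] fixed_ends by (simp add: poly_0_coeff_0)
qed (use perturbed_poly_basic odd_degree in auto)

end

lemma realizable_if_odd_monomials_positive:
  assumes "is_sign_pattern d \<sigma>" and "odd d" and "monomial_sign \<sigma> 0"
    and "\<And>j. j \<le> d \<Longrightarrow> odd j \<Longrightarrow> monomial_sign \<sigma> j"
    and "k \<le> d" "\<not> monomial_sign \<sigma> k"
  shows "\<exists>p. realizes p \<sigma> 2 1"
proof -
  have k: "even k" "k \<noteq> 0" "k \<noteq> d" using assms by metis+
  interpret perturbed_pattern d \<sigma> "\<lambda>j. odd j \<or> j = 0" k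
    by unfold_locales (use assms k in auto)
  have "1 < d" using \<open>odd d\<close> k \<open>k \<le> d\<close> by presburger
  have "realizes perturbed_poly \<sigma> 2 1"
  proof (rule realizes_perturbed_poly)
    show "poly (euler_shift k (euler_shift k perturbed_poly)) x \<noteq> 0" if "0 < x" for x
      using euler_shift2_perturbed_poly_pos[OF \<open>1 < d\<close> order_refl _ _ _ _ _ that] \<open>odd d\<close> k
      by (auto simp: le_Suc_eq)
    show "poly (euler_shift 0 perturbed_poly) x \<noteq> 0" if "x < 0" for x
    proof -
      have "poly (euler_shift 0 perturbed_poly) x < 0"
        by (rule euler_shift_perturbed_poly_neg[OF \<open>1 < d\<close> order_refl _ _ _ _ _ _ _ _ that])
          (use \<open>odd d\<close> \<open>1 < d\<close> k in \<open>auto simp: minus_one_power_iff\<close>)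
      then show ?thesis by simp
    qed
  qed
  then show ?thesis by blast
qed

lemma realizable_if_even_monomials_positive:
  assumes pattern: "is_sign_pattern d \<sigma>" and "odd d"
    and "\<And>j. j \<le> d \<Longrightarrow> even j \<Longrightarrow> monomial_sign \<sigma> j"
    and "k \<le> d" "\<not> monomial_sign \<sigma> k"
  shows "\<exists>p. realizes p \<sigma> 2 1"
proof -
  have "monomial_sign \<sigma> d" using pattern by (simp add: is_sign_pattern_def monomial_sign_def)
  then have "odd k" "k \<noteq> d" using assms by auto
  then have k: "odd k" "k \<noteq> 0" "k + 2 \<le> d" using \<open>odd d\<close> \<open>k \<le> d\<close> by presburger+
  interpret perturbed_pattern d \<sigma> "\<lambda>j. j = 0 \<or> j = d" k
    by unfold_locales (use assms k \<open>monomial_sign \<sigma> d\<close> in auto)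
  have "0 < d" using k by simp
  have "realizes perturbed_poly \<sigma> 2 1"
  proof (rule realizes_perturbed_poly)
    show "poly (euler_shift k (euler_shift k perturbed_poly)) x \<noteq> 0" if "0 < x" for x
      using euler_shift2_perturbed_poly_pos[OF \<open>0 < d\<close> order_refl _ _ _ _ _ that] k by auto
    show "poly (euler_shift (k + 1) perturbed_poly) x \<noteq> 0" if "x < 0" for x
      using euler_shift_perturbed_poly_neg[where l = "k + 1", OF \<open>0 < d\<close> order_refl _ _ _ _ _ _ _ _ that]
        \<open>odd d\<close> k
      by fastforce
  qed
  then show ?thesis by blast
qed

section \<open>Position of the negative root\<close>

lemma even_card_sign_changes_iff:
  fixes \<sigma> :: "bool list"
  assumes "n < length \<sigma>"
  shows "even (card {i. i < n \<and> \<sigma> ! i \<noteq> \<sigma> ! Suc i}) \<longleftrightarrow> \<sigma> ! 0 = \<sigma> ! n"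
  using assms
proof (induction n)
  case (Suc n)
  show ?case
  proof (cases "\<sigma> ! n = \<sigma> ! Suc n")
    case True
    then have "{i. i < Suc n \<and> \<sigma> ! i \<noteq> \<sigma> ! Suc i} = {i. i < n \<and> \<sigma> ! i \<noteq> \<sigma> ! Suc i}"
      using less_Suc_eq by auto
    with True Suc show ?thesis by simp
  next
    case False
    then have "{i. i < Suc n \<and> \<sigma> ! i \<noteq> \<sigma> ! Suc i} = insert n {i. i < n \<and> \<sigma> ! i \<noteq> \<sigma> ! Suc i}"
      by auto
    with False Suc show ?thesis by auto
  qed
qed simp

lemma monomial_signs_if_compatible_2:
  assumes "is_sign_pattern d \<sigma>" "compatible \<sigma> 2 neg"
  shows "monomial_sign \<sigma> 0" and "\<exists>k\<le>d. \<not> monomial_sign \<sigma> k"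
proof -
  have len: "length \<sigma> = Suc d" and "\<sigma> ! 0" using assms(1) by (auto simp: is_sign_pattern_def)
  have changes: "sign_changes \<sigma> = card {i. i < d \<and> \<sigma> ! i \<noteq> \<sigma> ! Suc i}"
    by (simp add: sign_changes_def len)
  have "2 \<le> sign_changes \<sigma>" "even (sign_changes \<sigma> - 2)" using assms(2) by (auto simp: compatible_def)
  then have "even (sign_changes \<sigma>)" "sign_changes \<sigma> \<noteq> 0" by auto
  then show "monomial_sign \<sigma> 0"
    using even_card_sign_changes_iff[of d \<sigma>] \<open>\<sigma> ! 0\<close> by (simp add: changes len monomial_sign_def)
  from \<open>sign_changes \<sigma> \<noteq> 0\<close> have "{i. i < d \<and> \<sigma> ! i \<noteq> \<sigma> ! Suc i} \<noteq> {}"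
    unfolding changes by (metis card.empty)
  then obtain i where "i < d" "\<sigma> ! i \<noteq> \<sigma> ! Suc i" by blast
  then obtain i' where "i' \<le> d" "\<not> \<sigma> ! i'"
    by (cases "\<sigma> ! i") (auto dest: Suc_leI less_imp_le)
  then show "\<exists>k\<le>d. \<not> monomial_sign \<sigma> k"
    by (intro exI[of _ "d - i'"]) (simp add: monomial_sign_def len)
qed

lemma poly_minus_lt_if_odd_coeffs_pos:
  fixes p :: "real poly"
  assumes "0 < degree p" "\<And>j. j \<le> degree p \<Longrightarrow> odd j \<Longrightarrow> 0 < coeff p j" "0 < x"
  shows "poly p (- x) < poly p x"
proof -
  have "0 < (\<Sum>j\<le>degree p. coeff p j * x ^ j - coeff p j * (- x) ^ j)"
  proof (rule sum_pos2[of _ 1])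
    fix j assume "j \<in> {..degree p}"
    then show "0 \<le> coeff p j * x ^ j - coeff p j * (- x) ^ j"
      using assms(2)[of j] assms(3) by (cases "odd j") simp_all
  qed (use assms in auto)
  also have "\<dots> = poly p x - poly p (- x)" by (simp add: poly_altdef sum_subtractf)
  finally show ?thesis by simp
qed

lemma poly_minus_pos_if_even_coeffs_pos:
  fixes p :: "real poly"
  assumes "\<And>j. j \<le> degree p \<Longrightarrow> even j \<Longrightarrow> 0 < coeff p j" "0 < x"
  shows "0 < poly p x + poly p (- x)"
proof -
  have "0 < (\<Sum>j\<le>degree p. coeff p j * x ^ j + coeff p j * (- x) ^ j)"
  proof (rule sum_pos2[of _ 0])
    fix j assume "j \<in> {..degree p}"
    then show "0 \<le> coeff p j * x ^ j + coeff p j * (- x) ^ j"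
      using assms(1)[of j] assms(2) by (cases "even j") simp_all
  qed (use assms in auto)
  also have "\<dots> = poly p x + poly p (- x)" by (simp add: poly_altdef sum.distrib)
  finally show ?thesis .
qed

lemma realizes_basic:
  assumes "realizes p \<sigma> pos neg" "is_sign_pattern d \<sigma>"
  shows "degree p = d" "lead_coeff p = 1" "\<And>j. j \<le> d \<Longrightarrow> 0 < coeff p j \<longleftrightarrow> monomial_sign \<sigma> j"
proof -
  have "degree p + 1 = length \<sigma>" "\<forall>j\<le>degree p. 0 < coeff p j \<longleftrightarrow> monomial_sign \<sigma> j"
    and "lead_coeff p = 1"
    using assms(1) unfolding realizes_def defines_pattern_def by blast+
  with assms(2) show "degree p = d" "lead_coeff p = 1"
    "\<And>j. j \<le> d \<Longrightarrow> 0 < coeff p j \<longleftrightarrow> monomial_sign \<sigma> j"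
    by (simp_all add: is_sign_pattern_def)
qed

lemma realizes_neg_root_unique:
  assumes "realizes p \<sigma> pos 1" "y < 0" "poly p y = 0" "z < 0" "poly p z = 0"
  shows "y = z"
proof -
  have "card {x. x < 0 \<and> poly p x = 0} = 1" using assms(1) by (simp add: realizes_def)
  then obtain w where w: "{x. x < 0 \<and> poly p x = 0} = {w}" by (rule card_1_singletonE)
  have "y \<in> {x. x < 0 \<and> poly p x = 0}" "z \<in> {x. x < 0 \<and> poly p x = 0}"
    using assms(2-) by simp_all
  then show ?thesis unfolding w by simp
qed

lemma realizes_neg_root_abs_lt_pos_root_if_odd_monomials_positive:
  assumes p: "realizes p \<sigma> pos 1" and pat: "is_sign_pattern d \<sigma>" "odd d" "monomial_sign \<sigma> 0"
    and odd_positive: "\<And>j. j \<le> d \<Longrightarrow> odd j \<Longrightarrow> monomial_sign \<sigma> j"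
    and "0 < \<alpha>" "poly p \<alpha> = 0" "0 < \<beta>" "poly p (- \<beta>) = 0"
  shows "\<beta> < \<alpha>"
proof -
  note basic = realizes_basic[OF p pat(1)]
  have "poly p (- \<alpha>) < 0"
    using poly_minus_lt_if_odd_coeffs_pos[of p \<alpha>] basic odd_positive pat \<open>0 < \<alpha>\<close> \<open>poly p \<alpha> = 0\<close>
    by (auto simp: odd_pos)
  moreover have "0 < poly p 0" using basic(3)[of 0] pat by (simp add: poly_0_coeff_0)
  ultimately obtain y where "- \<alpha> < y" "y < 0" "poly p y = 0"
    using poly_IVT_pos[of "- \<alpha>" 0 p] \<open>0 < \<alpha>\<close> by auto
  with realizes_neg_root_unique[OF p, of y "- \<beta>"] assms(8,9) show ?thesis by simp
qed

lemma realizes_pos_root_lt_neg_root_abs_if_even_monomials_positive: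
  assumes p: "realizes p \<sigma> pos 1" and pat: "is_sign_pattern d \<sigma>" "odd d"
    and even_positive: "\<And>j. j \<le> d \<Longrightarrow> even j \<Longrightarrow> monomial_sign \<sigma> j"
    and "0 < \<alpha>" "poly p \<alpha> = 0" "0 < \<beta>" "poly p (- \<beta>) = 0"
  shows "\<alpha> < \<beta>"
proof -
  note basic = realizes_basic[OF p pat(1)]
  have "0 < poly p (- \<alpha>)"
    using poly_minus_pos_if_even_coeffs_pos[of p \<alpha>] basic even_positive \<open>0 < \<alpha>\<close> \<open>poly p \<alpha> = 0\<close> by auto
  then obtain y where "y < - \<alpha>" "poly p y = 0"
    using poly_root_lt[of p "- \<alpha>"] basic(1,2) pat(2) by auto
  with realizes_neg_root_unique[OF p, of y "- \<beta>"] assms(5-) show ?thesis by simp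
qed

theorem theorem4:
  fixes d :: nat and \<sigma> :: "bool list"
  assumes "odd d" and "is_sign_pattern d \<sigma>" and "compatible \<sigma> 2 1"
  shows
   "((\<forall>j \<le> d. odd j \<longrightarrow> monomial_sign \<sigma> j) \<longrightarrow>
       (\<exists>p. realizes p \<sigma> 2 1) \<and>
       (\<forall>p \<alpha>1 \<alpha>2 \<beta>. realizes p \<sigma> 2 1 \<and> 0 < \<alpha>1 \<and> \<alpha>1 < \<alpha>2 \<and> 0 < \<beta> \<and>
          poly p \<alpha>1 = 0 \<and> poly p \<alpha>2 = 0 \<and> poly p (-\<beta>) = 0 \<longrightarrow> \<beta> < \<alpha>1 \<and> \<alpha>1 < \<alpha>2))
    \<and>
    ((\<forall>j \<le> d. even j \<longrightarrow> monomial_sign \<sigma> j) \<longrightarrow>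
       (\<exists>p. realizes p \<sigma> 2 1) \<and>
       (\<forall>p \<alpha>1 \<alpha>2 \<beta>. realizes p \<sigma> 2 1 \<and> 0 < \<alpha>1 \<and> \<alpha>1 < \<alpha>2 \<and> 0 < \<beta> \<and>
          poly p \<alpha>1 = 0 \<and> poly p \<alpha>2 = 0 \<and> poly p (-\<beta>) = 0 \<longrightarrow> \<alpha>1 < \<alpha>2 \<and> \<alpha>2 < \<beta>))"
proof -
  have sign_0: "monomial_sign \<sigma> 0" and "\<exists>k\<le>d. \<not> monomial_sign \<sigma> k"
    using monomial_signs_if_compatible_2[OF assms(2,3)] by blast+
  then obtain k where k: "k \<le> d" "\<not> monomial_sign \<sigma> k" by blast
  have "\<exists>p. realizes p \<sigma> 2 1" if "\<forall>j\<le>d. odd j \<longrightarrow> monomial_sign \<sigma> j"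
    using realizable_if_odd_monomials_positive[OF assms(2,1) sign_0 _ k] that by blast
  moreover have "\<beta> < \<alpha>" if "\<forall>j\<le>d. odd j \<longrightarrow> monomial_sign \<sigma> j"
    and "realizes p \<sigma> 2 1" "0 < \<alpha>" "poly p \<alpha> = 0" "0 < \<beta>" "poly p (- \<beta>) = 0" for p \<alpha> \<beta>
    using realizes_neg_root_abs_lt_pos_root_if_odd_monomials_positive[OF _ assms(2,1) sign_0] that by blast
  moreover have "\<exists>p. realizes p \<sigma> 2 1" if "\<forall>j\<le>d. even j \<longrightarrow> monomial_sign \<sigma> j"
    using realizable_if_even_monomials_positive[OF assms(2,1) _ k] that by blast
  moreover have "\<alpha> < \<beta>" if "\<forall>j\<le>d. even j \<longrightarrow> monomial_sign \<sigma> j"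
    and "realizes p \<sigma> 2 1" "0 < \<alpha>" "poly p \<alpha> = 0" "0 < \<beta>" "poly p (- \<beta>) = 0" for p \<alpha> \<beta>
    using realizes_pos_root_lt_neg_root_abs_if_even_monomials_positive[OF _ assms(2,1)] that by blast
  ultimately show ?thesis by (blast intro: order.strict_trans)
qed

end
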